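(* In the iAPG setting described in the context, for every $k\ge0$, $$F(x^{(k+1)})-F^*+\frac{\gamma_{k+1}}{2}\|x^*-z^{(k+1)}\|^2\le(1-\alpha_k)\Big[F(x^{(k)})-F^*+\frac{\gamma_k}{2}\|x^*-z^{(k)}\|^2\Big]+\varepsilon_k\alpha_k\|x^*-z^{(k+1)}\|.$$
   Context: iAPG setting. Let $g,h:\mathbb R^n\to\mathbb R$ and $r:\mathbb R^n\to\mathbb R\cup\{+\infty\}$, where $g$ is convex, $\mu$-strongly convex for some $\mu\ge0$, and differentiable with $L_g$-Lipschitz gradient ($L_g>0$); $h$ is convex and differentiable with $L_h$-Lipschitz gradient; $r$ is proper, closed and convex. Put $H=h+r$, $F=g+H$, and assume $F$ attains its minimum value $F^*$ at some point $x^*$. Fix constants $\gamma_{\mathrm{dec}}\in(0,1)$ and $\underline L>0$ with $\mu\le\underline L\le L_g$. We consider points $x^{(k)},z^{(k)},y^{(k)}\in\mathbb R^n$ and scalars $\eta_k>0,\alpha_k>0,\gamma_k>0,\varepsilon_k\ge0$ ($k\ge0$) such that $x^{(0)}=z^{(0)}\in\mathrm{dom}(H)$, $\gamma_0\ge\mu$, and for every $k\ge0$: (i) $\gamma_{\mathrm{dec}}/L_g<\eta_k\le1/\underline L$; (ii) $\gamma_{k+1}=\alpha_k^2/\eta_k=(1-\alpha_k)\gamma_k+\alpha_k\mu$; (iii) $y^{(k)}=\frac{1}{\alpha_k\gamma_k+\gamma_{k+1}}\big(\alpha_k\gamma_k z^{(k)}+\gamma_{k+1}x^{(k)}\big)$;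 (iv) $\mathrm{dist}\big(0,\ \nabla g(y^{(k)})+\tfrac1{\eta_k}(x^{(k+1)}-y^{(k)})+\partial H(x^{(k+1)})\big)\le\varepsilon_k$; (v) $g(x^{(k+1)})\le g(y^{(k)})+\langle\nabla g(y^{(k)}),x^{(k+1)}-y^{(k)}\rangle+\frac1{2\eta_k}\|x^{(k+1)}-y^{(k)}\|^2$; (vi) $z^{(k+1)}=x^{(k)}+\frac1{\alpha_k}(x^{(k+1)}-x^{(k)})$. Here $\partial$ denotes the convex subdifferential and $\mathrm{dist}(0,S)=\inf_{s\in S}\|s\|$. *)

theory Defs
  imports "HOL-Analysis.Analysis" "HOL-Library.Extended_Real"
begin

definition proper_fun :: "('a \<Rightarrow> ereal) \<Rightarrow> bool" where
  "proper_fun f \<longleftrightarrow> (\<forall>x. f x \<noteq> -\<infinity>) \<and> (\<exists>x. f x < \<infinity>)"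

definition ext_dom :: "('a \<Rightarrow> ereal) \<Rightarrow> 'a set" where
  "ext_dom f = {x. f x < \<infinity>}"

definition closed_fun :: "('a::topological_space \<Rightarrow> ereal) \<Rightarrow> bool" where
  "closed_fun f \<longleftrightarrow> closed {(x, t::real). f x \<le> ereal t}"

definition convex_fun :: "('a::real_vector \<Rightarrow> ereal) \<Rightarrow> bool" where
  "convex_fun f \<longleftrightarrow> convex {(x, t::real). f x \<le> ereal t}"

definition subdiff :: "('a::real_inner \<Rightarrow> ereal) \<Rightarrow> 'a \<Rightarrow> 'a set" where
  "subdiff f x = (if \<bar>f x\<bar> = \<infinity> then {}
     else {s. \<forall>y. f y \<ge> f x + ereal (inner s (y - x))})"

definition strongly_convex :: "real \<Rightarrow> ('a::real_inner \<Rightarrow> real) \<Rightarrow> bool" where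
  "strongly_convex \<mu> g \<longleftrightarrow> convex_on UNIV (\<lambda>x. g x - \<mu> / 2 * (norm x)\<^sup>2)"

text \<open>Distance from 0 to a set is at most eps (the distance to the empty set is +infinity).\<close>
definition dist0_le :: "'a::real_normed_vector set \<Rightarrow> real \<Rightarrow> bool" where
  "dist0_le S \<epsilon> \<longleftrightarrow> S \<noteq> {} \<and> infdist 0 S \<le> \<epsilon>"

end

theory Submission
  imports Defs
begin

text \<open>
  Write \<open>x, z, y, x\<^sup>+, z\<^sup>+\<close> for \<open>x\<^sup>(\<^sup>k\<^sup>), z\<^sup>(\<^sup>k\<^sup>), y\<^sup>(\<^sup>k\<^sup>), x\<^sup>(\<^sup>k\<^sup>+\<^sup>1\<^sup>), z\<^sup>(\<^sup>k\<^sup>+\<^sup>1\<^sup>)\<close>.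
  Average, with weights \<open>1 - \<alpha>\<^sub>k\<close> and \<open>\<alpha>\<^sub>k\<close>, the lower bounds for \<open>F\<close> at \<open>x\<close> and at \<open>x\<^sup>*\<close>
  obtained from strong convexity of \<open>g\<close> at \<open>y\<close> and from a subgradient \<open>v\<close> of \<open>H\<close> at \<open>x\<^sup>+\<close>,
  and bound \<open>g(x\<^sup>+)\<close> by the descent condition (v).  Since \<open>x\<^sup>+ = (1 - \<alpha>\<^sub>k) x + \<alpha>\<^sub>k z\<^sup>+\<close>,
  the linear terms combine into \<open>\<alpha>\<^sub>k \<langle>\<nabla>g(y) + v, x\<^sup>* - z\<^sup>+\<rangle>\<close>; replacing \<open>\<nabla>g(y) + v\<close> by
  the residual \<open>\<nabla>g(y) + (x\<^sup>+ - y)/\<eta>\<^sub>k + v\<close> of (iv) gives the error term by Cauchy-Schwarz.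
  What is left is a quadratic form in \<open>x, z, z\<^sup>+\<close> relative to \<open>x\<^sup>*\<close>; by the choice of \<open>y\<close>
  and of \<open>\<gamma>\<^sub>k\<^sub>+\<^sub>1\<close> it is a nonpositive multiple of \<open>\<parallel>x - z\<parallel>\<^sup>2\<close>.  The weights are
  admissible, \<open>\<alpha>\<^sub>k \<le> 1\<close>, because \<open>\<gamma>\<^sub>k \<ge> \<mu>\<close> propagates along (ii) and \<open>1/\<eta>\<^sub>k \<ge> L \<ge> \<mu>\<close>.
\<close>

lemma convex_on_gradient_le:
  fixes \<phi> :: "'a::real_normed_vector \<Rightarrow> real"
  assumes convex: "convex_on UNIV \<phi>" and deriv: "(\<phi> has_derivative D) (at y)"
  shows "\<phi> y + D (a - y) \<le> \<phi> a"
proof -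
  define \<psi> where "\<psi> t = \<phi> (y + t *\<^sub>R (a - y))" for t :: real
  have convex_\<psi>: "convex_on UNIV \<psi>"
  proof (rule convex_onI)
    fix t s u :: real assume "0 < t" "t < 1"
    moreover have "y + ((1 - t) * s + t * u) *\<^sub>R (a - y)
        = (1 - t) *\<^sub>R (y + s *\<^sub>R (a - y)) + t *\<^sub>R (y + u *\<^sub>R (a - y))"
      by (simp add: algebra_simps)
    ultimately show "\<psi> ((1 - t) *\<^sub>R s + t *\<^sub>R u) \<le> (1 - t) * \<psi> s + t * \<psi> u"
      using convex_onD[OF convex, of t] by (simp add: \<psi>_def)
  qed simp
  have "((\<lambda>t. y + t *\<^sub>R (a - y)) has_derivative (\<lambda>t. t *\<^sub>R (a - y))) (at 0)"
    by (auto intro!: derivative_eq_intros)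
  moreover have "(\<phi> has_derivative D) (at (y + 0 *\<^sub>R (a - y)))"
    using deriv by simp
  ultimately have "(\<psi> has_derivative (\<lambda>t. D (t *\<^sub>R (a - y)))) (at 0)"
    unfolding \<psi>_def by (rule has_derivative_compose)
  moreover have "(\<lambda>t. D (t *\<^sub>R (a - y))) = (*) (D (a - y))"
    using linear_scale[OF has_derivative_linear[OF deriv]] by (auto simp: fun_eq_iff)
  ultimately have "(\<psi> has_field_derivative D (a - y)) (at 0)"
    by (simp add: has_field_derivative_def)
  with convex_\<psi> have "D (a - y) * (1 - 0) \<le> \<psi> 1 - \<psi> 0"
    by (intro convex_on_imp_above_tangent[where A = UNIV]) auto
  then show ?thesis by (simp add: \<psi>_def)
qed

lemma strongly_convex_gradient_le:
  fixes g :: "'a::real_inner \<Rightarrow> real"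
  assumes convex: "strongly_convex \<mu> g"
    and deriv: "(g has_derivative (\<lambda>v. inner g' v)) (at y)"
  shows "g y + inner g' (a - y) + \<mu> / 2 * (norm (a - y))\<^sup>2 \<le> g a"
proof -
  have "((\<lambda>x. \<mu> / 2 * inner x x) has_derivative (\<lambda>v. \<mu> / 2 * (inner y v + inner v y))) (at y)"
    by (auto intro!: derivative_eq_intros)
  then have "((\<lambda>x. \<mu> / 2 * (norm x)\<^sup>2) has_derivative (\<lambda>v. \<mu> * inner y v)) (at y)"
    by (simp add: power2_norm_eq_inner inner_commute flip: distrib_left)
  from convex_on_gradient_le[OF convex[unfolded strongly_convex_def] has_derivative_diff[OF deriv this]]
  have "g y - \<mu> / 2 * (norm y)\<^sup>2 + (inner g' (a - y) - \<mu> * inner y (a - y))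
      \<le> g a - \<mu> / 2 * (norm a)\<^sup>2" .
  moreover have "(norm (a - y))\<^sup>2 = (norm a)\<^sup>2 - 2 * inner y (a - y) - (norm y)\<^sup>2"
    unfolding power2_norm_eq_inner by (simp add: inner_diff_left inner_diff_right inner_commute)
  then have "\<mu> / 2 * (norm (a - y))\<^sup>2 = \<mu> / 2 * (norm a)\<^sup>2 - \<mu> * inner y (a - y) - \<mu> / 2 * (norm y)\<^sup>2"
    by (simp only:) (simp add: algebra_simps)
  ultimately show ?thesis by linarith
qed

lemma le_add_of_forall_gt:
  fixes a b c t :: real
  assumes le: "\<And>e. c < e \<Longrightarrow> a \<le> b + e * t" and t: "0 \<le> t"
  shows "a \<le> b + c * t"
proof (rule field_le_epsilon)
  fix \<delta> :: real assume "0 < \<delta>"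
  then have "a \<le> b + (c + \<delta> / (t + 1)) * t" using t by (intro le) simp
  also have "\<dots> \<le> b + c * t + \<delta>"
    using t \<open>0 < \<delta>\<close> by (simp add: distrib_right field_simps)
  finally show "a \<le> b + c * t + \<delta>" .
qed

lemma dist0_le_obtains:
  assumes "dist0_le S \<epsilon>" and "\<epsilon> < e"
  obtains s where "s \<in> S" and "norm s < e"
proof -
  have "S \<noteq> {}" and "(INF s\<in>S. dist 0 s) < e"
    using assms infdist_notempty[of S 0] by (auto simp: dist0_le_def)
  moreover have "bdd_below (dist 0 ` S)" by (rule bdd_belowI[of _ 0]) auto
  ultimately show ?thesis using that by (auto simp: cINF_less_iff)
qed

lemma subdiff_le_real:
  assumes "v \<in> subdiff f x" and "f u < \<infinity>"
  shows "real_of_ereal (f x) + inner v (u - x) \<le> real_of_ereal (f u)"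
proof -
  have "\<bar>f x\<bar> \<noteq> \<infinity>" and "f x + ereal (inner v (u - x)) \<le> f u"
    using assms(1) by (auto simp: subdiff_def split: if_splits)
  then show ?thesis using assms(2) by (cases "f x"; cases "f u") auto
qed

lemma momentum_step_bounds:
  fixes \<alpha> \<gamma> \<eta> \<mu> L :: real
  assumes "\<mu> \<le> \<gamma>" "0 < \<eta>" "\<eta> \<le> 1 / L" "\<mu> \<le> L" "0 < \<alpha>"
    and step: "\<alpha>\<^sup>2 / \<eta> = (1 - \<alpha>) * \<gamma> + \<alpha> * \<mu>"
  shows "\<alpha> \<le> 1" and "\<mu> \<le> \<alpha>\<^sup>2 / \<eta>"
proof -
  show "\<alpha> \<le> 1"
  proof (rule ccontr)
    assume "\<not> \<alpha> \<le> 1"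
    then have "\<alpha>\<^sup>2 / \<eta> > 1 / \<eta>"
      using \<open>0 < \<eta>\<close> by (simp add: divide_strict_right_mono power_gt1)
    moreover have "1 / \<eta> \<ge> L" using \<open>0 < \<eta>\<close> \<open>\<eta> \<le> 1 / L\<close>
      by (cases "L \<le> 0") (auto simp: field_simps order_trans[OF mult_nonpos_nonneg])
    moreover have "\<alpha>\<^sup>2 / \<eta> \<le> \<mu>"
      using \<open>\<not> \<alpha> \<le> 1\<close> \<open>\<mu> \<le> \<gamma>\<close> mult_right_mono[of 1 \<alpha> "\<gamma> - \<mu>"] step
      by (simp add: algebra_simps)
    ultimately show False using \<open>\<mu> \<le> L\<close> by linarith
  qed
  then show "\<mu> \<le> \<alpha>\<^sup>2 / \<eta>"
    using \<open>\<mu> \<le> \<gamma>\<close> step mult_nonneg_nonneg[of "1 - \<alpha>" "\<gamma> - \<mu>"] by (simp add: algebra_simps)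
qed

lemma accelerated_quadratic_le:
  fixes x z w xp y a :: "'a::real_inner" and \<alpha> \<gamma> \<gamma>' \<mu> :: real
  assumes \<alpha>: "0 < \<alpha>" "\<alpha> \<le> 1" and \<gamma>: "0 < \<gamma>" and \<mu>: "0 \<le> \<mu>"
    and \<gamma>': "\<gamma>' = (1 - \<alpha>) * \<gamma> + \<alpha> * \<mu>"
    and y: "y = (1 / (\<alpha> * \<gamma> + \<gamma>')) *\<^sub>R ((\<alpha> * \<gamma>) *\<^sub>R z + \<gamma>' *\<^sub>R x)"
    and xp: "xp = (1 - \<alpha>) *\<^sub>R x + \<alpha> *\<^sub>R w"
  shows "\<gamma>' / \<alpha> * inner (xp - y) (a - w) + \<gamma>' / (2 * \<alpha>\<^sup>2) * (norm (xp - y))\<^sup>2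
      - \<alpha> * \<mu> / 2 * (norm (a - y))\<^sup>2 + \<gamma>' / 2 * (norm (a - w))\<^sup>2
    \<le> (1 - \<alpha>) * \<gamma> / 2 * (norm (a - z))\<^sup>2"
proof -
  define S where "S = \<gamma> + \<alpha> * \<mu>"
  have S: "\<alpha> * \<gamma> + \<gamma>' = S" and "0 < S"
    using \<alpha> \<gamma> \<mu> by (auto simp: S_def \<gamma>' algebra_simps intro: add_pos_nonneg)
  define X Z Y A where "X = x - a" and "Z = z - a" and "Y = y - a" and "A = (1 - \<alpha>) *\<^sub>R X - Y"
  have Y: "Y = (1 / S) *\<^sub>R ((\<alpha> * \<gamma>) *\<^sub>R Z + \<gamma>' *\<^sub>R X)"
  proof -
    have "(\<alpha> * \<gamma>) *\<^sub>R Z + \<gamma>' *\<^sub>R X = (\<alpha> * \<gamma>) *\<^sub>R z + \<gamma>' *\<^sub>R x - S *\<^sub>R a"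
      by (simp add: Z_def X_def S[symmetric] algebra_simps)
    then show ?thesis using \<open>0 < S\<close> by (simp add: Y_def y S scaleR_diff_right)
  qed
  have A: "A = (- \<alpha> / S) *\<^sub>R ((\<alpha> * \<mu>) *\<^sub>R X + \<gamma> *\<^sub>R Z)"
  proof -
    have "A = (1 - \<alpha> - \<gamma>' / S) *\<^sub>R X - (\<alpha> / S * \<gamma>) *\<^sub>R Z"
      by (simp add: A_def Y algebra_simps scaleR_add_right)
    also have "1 - \<alpha> - \<gamma>' / S = - \<alpha> / S * (\<alpha> * \<mu>)"
      using \<open>0 < S\<close> by (simp add: S_def \<gamma>' field_simps)
    finally show ?thesis by (simp add: scaleR_add_right)
  qed
  have completed_square: "\<gamma>' / \<alpha> * inner (xp - y) (a - w) + \<gamma>' / (2 * \<alpha>\<^sup>2) * (norm (xp - y))\<^sup>2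
      + \<gamma>' / 2 * (norm (a - w))\<^sup>2 = \<gamma>' / (2 * \<alpha>\<^sup>2) * (norm A)\<^sup>2"
  proof -
    define V where "V = a - w"
    have "xp - y = A - \<alpha> *\<^sub>R V"
      by (simp add: xp A_def X_def Y_def V_def algebra_simps)
    then show ?thesis
      using \<alpha> unfolding V_def[symmetric] power2_norm_eq_inner \<open>xp - y = A - \<alpha> *\<^sub>R V\<close>
      by (simp add: inner_diff_left inner_diff_right inner_commute field_simps power2_eq_square)
  qed
  define xx xz zz where "xx = inner X X" and "xz = inner X Z" and "zz = inner Z Z"
  have "(norm A)\<^sup>2 = (\<alpha> / S)\<^sup>2 * ((\<alpha> * \<mu>)\<^sup>2 * xx + 2 * (\<alpha> * \<mu>) * \<gamma> * xz + \<gamma>\<^sup>2 * zz)"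
    unfolding A power2_norm_eq_inner xx_def xz_def zz_def
    by (simp add: inner_add_left inner_add_right inner_commute power2_eq_square algebra_simps)
  moreover have "(norm Y)\<^sup>2 = (1 / S)\<^sup>2 * ((\<alpha> * \<gamma>)\<^sup>2 * zz + 2 * (\<alpha> * \<gamma>) * \<gamma>' * xz + \<gamma>'\<^sup>2 * xx)"
    unfolding Y power2_norm_eq_inner xx_def xz_def zz_def
    by (simp add: inner_add_left inner_add_right inner_commute power2_eq_square algebra_simps)
  moreover have "(norm (a - z))\<^sup>2 = zz"
    unfolding norm_minus_commute[of a z] by (simp add: zz_def Z_def power2_norm_eq_inner)
  ultimately have gap: "(1 - \<alpha>) * \<gamma> / 2 * (norm (a - z))\<^sup>2
      - (\<gamma>' / (2 * \<alpha>\<^sup>2) * (norm A)\<^sup>2 - \<alpha> * \<mu> / 2 * (norm Y)\<^sup>2)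
    = \<alpha> * \<mu> * \<gamma>' * (1 - \<alpha>) * \<gamma> / (2 * S\<^sup>2) * (xx - 2 * xz + zz)"
    using \<open>0 < S\<close> \<alpha> unfolding S_def \<gamma>' by (simp add: field_simps) algebra
  have "xx - 2 * xz + zz = (norm (X - Z))\<^sup>2"
    by (simp add: xx_def xz_def zz_def power2_norm_eq_inner inner_diff_left inner_diff_right inner_commute)
  then have "0 \<le> \<alpha> * \<mu> * \<gamma>' * (1 - \<alpha>) * \<gamma> / (2 * S\<^sup>2) * (xx - 2 * xz + zz)"
    using \<alpha> \<gamma> \<mu> \<open>0 < S\<close> S by (auto intro!: divide_nonneg_pos mult_nonneg_nonneg simp: \<gamma>')
  with gap completed_square show ?thesis
    unfolding Y_def norm_minus_commute[of y a] by linarith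
qed

lemma inexact_accelerated_step_le:
  fixes x z y xp w a q v :: "'a::real_inner"
  assumes \<alpha>: "0 < \<alpha>" "\<alpha> \<le> 1" and \<gamma>: "0 < \<gamma>" and \<mu>: "0 \<le> \<mu>" and \<eta>: "0 < \<eta>"
    and step: "\<alpha>\<^sup>2 / \<eta> = (1 - \<alpha>) * \<gamma> + \<alpha> * \<mu>"
    and y: "y = (1 / (\<alpha> * \<gamma> + \<alpha>\<^sup>2 / \<eta>)) *\<^sub>R ((\<alpha> * \<gamma>) *\<^sub>R z + (\<alpha>\<^sup>2 / \<eta>) *\<^sub>R x)"
    and w: "w = x + (1 / \<alpha>) *\<^sub>R (xp - x)"
    and gx: "gy + inner q (x - y) \<le> gx"
    and ga: "gy + inner q (a - y) + \<mu> / 2 * (norm (a - y))\<^sup>2 \<le> ga"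
    and gxp: "gxp \<le> gy + inner q (xp - y) + 1 / (2 * \<eta>) * (norm (xp - y))\<^sup>2"
    and Hx: "Hp + inner v (x - xp) \<le> Hx"
    and Ha: "Hp + inner v (a - xp) \<le> Ha"
    and residual: "norm (q + (1 / \<eta>) *\<^sub>R (xp - y) + v) \<le> e"
  shows "gxp + Hp - (ga + Ha) + \<alpha>\<^sup>2 / \<eta> / 2 * (norm (a - w))\<^sup>2
    \<le> (1 - \<alpha>) * (gx + Hx - (ga + Ha) + \<gamma> / 2 * (norm (a - z))\<^sup>2) + e * (\<alpha> * norm (a - w))"
proof -
  define E where "E = q + (1 / \<eta>) *\<^sub>R (xp - y) + v"
  have xp: "xp = (1 - \<alpha>) *\<^sub>R x + \<alpha> *\<^sub>R w"
    using \<alpha> by (simp add: w algebra_simps)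
  have "(1 - \<alpha>) * (gy + inner q (x - y)) + \<alpha> * (gy + inner q (a - y) + \<mu> / 2 * (norm (a - y))\<^sup>2)
      + (1 - \<alpha>) * (Hp + inner v (x - xp)) + \<alpha> * (Hp + inner v (a - xp))
    \<le> (1 - \<alpha>) * gx + \<alpha> * ga + (1 - \<alpha>) * Hx + \<alpha> * Ha"
    using \<alpha> gx ga Hx Ha by (intro add_mono mult_left_mono) auto
  then have "gy + Hp + (1 - \<alpha>) * inner q (x - y) + \<alpha> * inner q (a - y) + \<alpha> * \<mu> / 2 * (norm (a - y))\<^sup>2
      + (1 - \<alpha>) * inner v (x - xp) + \<alpha> * inner v (a - xp)
    \<le> (1 - \<alpha>) * gx + \<alpha> * ga + (1 - \<alpha>) * Hx + \<alpha> * Ha"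
    by (simp add: algebra_simps)
  moreover have "(1 - \<alpha>) * inner q (x - y) + \<alpha> * inner q (a - y)
      + (1 - \<alpha>) * inner v (x - xp) + \<alpha> * inner v (a - xp)
    = inner q (xp - y) + \<alpha> * inner E (a - w) - \<alpha> / \<eta> * inner (xp - y) (a - w)"
    by (simp add: E_def xp inner_add_left inner_diff_right inner_add_right algebra_simps)
  moreover have "- (\<alpha> * inner E (a - w)) \<le> e * (\<alpha> * norm (a - w))"
  proof -
    have "- inner E (a - w) \<le> norm E * norm (a - w)"
      using Cauchy_Schwarz_ineq2[of E "a - w"] by (simp add: abs_le_iff)
    also have "\<dots> \<le> e * norm (a - w)"
      using residual by (simp add: E_def mult_right_mono)
    finally have "- inner E (a - w) \<le> e * norm (a - w)" .
    from mult_left_mono[OF this, of \<alpha>] \<alpha> show ?thesis by (simp add: algebra_simps)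
  qed
  moreover have "\<alpha> / \<eta> * inner (xp - y) (a - w) + 1 / (2 * \<eta>) * (norm (xp - y))\<^sup>2
      - \<alpha> * \<mu> / 2 * (norm (a - y))\<^sup>2 + \<alpha>\<^sup>2 / \<eta> / 2 * (norm (a - w))\<^sup>2
    \<le> (1 - \<alpha>) * \<gamma> / 2 * (norm (a - z))\<^sup>2"
  proof -
    have "\<alpha>\<^sup>2 / \<eta> / \<alpha> = \<alpha> / \<eta>" "\<alpha>\<^sup>2 / \<eta> / (2 * \<alpha>\<^sup>2) = 1 / (2 * \<eta>)"
      using \<alpha> by (simp_all add: field_simps power2_eq_square)
    then show ?thesis
      using accelerated_quadratic_le[OF \<alpha> \<gamma> \<mu> step y xp, of a] by simp
  qed
  ultimately have "gxp + Hp - (ga + Ha) + \<alpha>\<^sup>2 / \<eta> / 2 * (norm (a - w))\<^sup>2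
    \<le> (1 - \<alpha>) * gx + \<alpha> * ga + (1 - \<alpha>) * Hx + \<alpha> * Ha - (ga + Ha)
      + (1 - \<alpha>) * \<gamma> / 2 * (norm (a - z))\<^sup>2 + e * (\<alpha> * norm (a - w))"
    using gxp by linarith
  then show ?thesis by (simp add: algebra_simps)
qed

lemma inexact_accelerated_step_subdiff_le:
  fixes x z y xp w a q :: "'a::real_inner" and H :: "'a \<Rightarrow> ereal"
  assumes \<alpha>: "0 < \<alpha>" "\<alpha> \<le> 1" and \<gamma>: "0 < \<gamma>" and \<mu>: "0 \<le> \<mu>" and \<eta>: "0 < \<eta>"
    and step: "\<alpha>\<^sup>2 / \<eta> = (1 - \<alpha>) * \<gamma> + \<alpha> * \<mu>"
    and y: "y = (1 / (\<alpha> * \<gamma> + \<alpha>\<^sup>2 / \<eta>)) *\<^sub>R ((\<alpha> * \<gamma>) *\<^sub>R z + (\<alpha>\<^sup>2 / \<eta>) *\<^sub>R x)"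
    and w: "w = x + (1 / \<alpha>) *\<^sub>R (xp - x)"
    and gx: "gy + inner q (x - y) \<le> gx"
    and ga: "gy + inner q (a - y) + \<mu> / 2 * (norm (a - y))\<^sup>2 \<le> ga"
    and gxp: "gxp \<le> gy + inner q (xp - y) + 1 / (2 * \<eta>) * (norm (xp - y))\<^sup>2"
    and H_finite: "H x < \<infinity>" "H a < \<infinity>"
    and inexact: "dist0_le ((\<lambda>s. q + (1 / \<eta>) *\<^sub>R (xp - y) + s) ` subdiff H xp) \<epsilon>"
  shows "gxp + real_of_ereal (H xp) - (ga + real_of_ereal (H a)) + \<alpha>\<^sup>2 / \<eta> / 2 * (norm (a - w))\<^sup>2
    \<le> (1 - \<alpha>) * (gx + real_of_ereal (H x) - (ga + real_of_ereal (H a)) + \<gamma> / 2 * (norm (a - z))\<^sup>2)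
      + \<epsilon> * (\<alpha> * norm (a - w))"
    (is "?lhs \<le> ?rhs + \<epsilon> * ?t")
proof (rule le_add_of_forall_gt)
  \<comment> \<open>the infimum in \<open>dist0_le\<close> need not be attained, so argue with any \<open>e > \<epsilon>\<close>\<close>
  fix e assume "\<epsilon> < e"
  with inexact obtain v where v: "v \<in> subdiff H xp"
    and residual: "norm (q + (1 / \<eta>) *\<^sub>R (xp - y) + v) \<le> e"
    by (auto elim!: dist0_le_obtains)
  from inexact_accelerated_step_le[OF \<alpha> \<gamma> \<mu> \<eta> step y w gx ga gxp
      subdiff_le_real[OF v H_finite(1)] subdiff_le_real[OF v H_finite(2)] residual]
  show "?lhs \<le> ?rhs + e * ?t" .
qed (use \<alpha> in simp)

theorem proposition3p4:
  fixes g h :: "real ^ 'n \<Rightarrow> real"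
    and g' h' :: "real ^ 'n \<Rightarrow> real ^ 'n"
    and r :: "real ^ 'n \<Rightarrow> ereal"
    and \<mu> Lg Lh \<gamma>dec Llow Fstar :: real
    and xstar :: "real ^ 'n"
    and x z y :: "nat \<Rightarrow> real ^ 'n"
    and \<eta> \<alpha> \<gamma> \<epsilon> :: "nat \<Rightarrow> real"
    and k :: nat
  defines "H \<equiv> (\<lambda>u. ereal (h u) + r u)"
  defines "F \<equiv> (\<lambda>u. ereal (g u) + H u)"
  assumes g_convex: "convex_on UNIV g"
    and mu_nonneg: "\<mu> \<ge> 0"
    and g_strong: "strongly_convex \<mu> g"
    and g_grad: "\<And>u. (g has_derivative (\<lambda>v. inner (g' u) v)) (at u)"
    and Lg_pos: "Lg > 0"
    and g_lip: "lipschitz_on Lg UNIV g'"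
    and h_convex: "convex_on UNIV h"
    and h_grad: "\<And>u. (h has_derivative (\<lambda>v. inner (h' u) v)) (at u)"
    and h_lip: "lipschitz_on Lh UNIV h'"
    and r_proper: "proper_fun r"
    and r_closed: "closed_fun r"
    and r_convex: "convex_fun r"
    and xstar_min: "F xstar = ereal Fstar" "\<And>u. F xstar \<le> F u"
    and \<gamma>dec: "0 < \<gamma>dec" "\<gamma>dec < 1"
    and Llow: "Llow > 0" "\<mu> \<le> Llow" "Llow \<le> Lg"
    and pos: "\<And>j. \<eta> j > 0" "\<And>j. \<alpha> j > 0" "\<And>j. \<gamma> j > 0" "\<And>j. \<epsilon> j \<ge> 0"
    and init: "x 0 = z 0" "x 0 \<in> ext_dom H" "\<gamma> 0 \<ge> \<mu>"
    and step_i: "\<And>j. \<gamma>dec / Lg < \<eta> j \<and> \<eta> j \<le> 1 / Llow"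
    and step_ii: "\<And>j. \<gamma> (Suc j) = (\<alpha> j)\<^sup>2 / \<eta> j"
                 "\<And>j. (\<alpha> j)\<^sup>2 / \<eta> j = (1 - \<alpha> j) * \<gamma> j + \<alpha> j * \<mu>"
    and step_iii: "\<And>j. y j = (1 / (\<alpha> j * \<gamma> j + \<gamma> (Suc j))) *\<^sub>R
                     ((\<alpha> j * \<gamma> j) *\<^sub>R z j + \<gamma> (Suc j) *\<^sub>R x j)"
    and step_iv: "\<And>j. dist0_le ((\<lambda>s. g' (y j) + (1 / \<eta> j) *\<^sub>R (x (Suc j) - y j) + s)
                          ` subdiff H (x (Suc j))) (\<epsilon> j)"
    and step_v: "\<And>j. g (x (Suc j)) \<le> g (y j) + inner (g' (y j)) (x (Suc j) - y j)
                     + 1 / (2 * \<eta> j) * (norm (x (Suc j) - y j))\<^sup>2"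
    and step_vi: "\<And>j. z (Suc j) = x j + (1 / \<alpha> j) *\<^sub>R (x (Suc j) - x j)"
  shows "F (x (Suc k)) - ereal Fstar + ereal (\<gamma> (Suc k) / 2 * (norm (xstar - z (Suc k)))\<^sup>2)
         \<le> ereal (1 - \<alpha> k) * (F (x k) - ereal Fstar + ereal (\<gamma> k / 2 * (norm (xstar - z k))\<^sup>2))
           + ereal (\<epsilon> k * \<alpha> k * norm (xstar - z (Suc k)))"
proof -
  have F_eq: "F u = ereal (g u + real_of_ereal (H u))" if "H u < \<infinity>" for u
  proof -
    have "r u \<noteq> -\<infinity>" using r_proper by (simp add: proper_fun_def)
    then show ?thesis using that by (cases "H u") (auto simp: F_def H_def)
  qed
  have H_Suc_finite: "H (x (Suc j)) < \<infinity>" for j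
    using step_iv[of j] by (auto simp: dist0_le_def subdiff_def split: if_splits)
  have H_finite: "H (x k) < \<infinity>"
    using init(2) H_Suc_finite by (cases k) (auto simp: ext_dom_def)
  have H_xstar: "H xstar = ereal (Fstar - g xstar)"
    using xstar_min(1) by (cases "H xstar") (auto simp: F_def)
  then have H_xstar_finite: "H xstar < \<infinity>" by simp
  have \<gamma>_ge: "\<mu> \<le> \<gamma> j" for j
  proof (induction j)
    case (Suc j)
    then show ?case
      using momentum_step_bounds(2)[OF Suc _ _ Llow(2) pos(2) step_ii(2)] step_i pos(1) step_ii(1) by auto
  qed (use init(3) in simp)
  have \<alpha>_le: "\<alpha> k \<le> 1"
    using momentum_step_bounds(1)[OF \<gamma>_ge _ _ Llow(2) pos(2) step_ii(2)] step_i pos(1) by auto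
  have gradient_le: "g (y k) + inner (g' (y k)) (u - y k) + \<mu> / 2 * (norm (u - y k))\<^sup>2 \<le> g u" for u
    using strongly_convex_gradient_le[OF g_strong g_grad] .
  have "0 \<le> \<mu> / 2 * (norm (x k - y k))\<^sup>2" using mu_nonneg by simp
  then have "g (y k) + inner (g' (y k)) (x k - y k) \<le> g (x k)"
    using gradient_le[of "x k"] by linarith
  from inexact_accelerated_step_subdiff_le[OF pos(2) \<alpha>_le pos(3) mu_nonneg pos(1) step_ii(2)
      step_iii[of k, unfolded step_ii(1)] step_vi this gradient_le[of xstar] step_v H_finite H_xstar_finite step_iv]
  show ?thesis
    using H_xstar by (simp add: F_eq[OF H_Suc_finite] F_eq[OF H_finite] step_ii(1) mult.assoc)
qed

end
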